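(* Let $n\in\mathbb{N}$ and $\ell\in\{a,a^{-1},b,b^{-1}\}$. If $w\in\ell I_n\setminus I_n$, then $w$ begins with $\ell$.
   Context: $\mathbb{F}$ is the free group on generators $a,b$ with identity $e$. For $n=4k+i$ with $k\in\mathbb{N}$ and $0\le i<4$, set $\ell_n=a,a^{-1},b,b^{-1}$ according as $i=0,1,2,3$. For $g\in\mathbb{F}$ and $S\subseteq\mathbb{F}$ let $gS=\{gs:s\in S\}$. Define $I_0=\{e\}$ and $I_{n+1}=I_n\cup\ell_nI_n$. For $w\in\mathbb{F}$, $\overline{w}$ is its reduced word and $*$ is concatenation of words. An element $w$ begins with $\ell$ if $\overline{w}=\overline{\ell}*\overline{u}$ for some $u\in\mathbb{F}$. *)

theory Defs
  imports Main
begin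

text \<open>The free group F on generators a, b, modelled as reduced words.
  A letter is a generator together with a flag "inverted".
  Group elements are reduced words; the identity e is the empty word.\<close>

datatype gen = GA | GB

type_synonym letter = "gen \<times> bool"

definition inv_letter :: "letter \<Rightarrow> letter" where
  "inv_letter x = (fst x, \<not> snd x)"

fun reduced :: "letter list \<Rightarrow> bool" where
  "reduced [] = True"
| "reduced [x] = True"
| "reduced (x # y # ys) = (y \<noteq> inv_letter x \<and> reduced (y # ys))"

definition FG :: "letter list set" where
  "FG = {w. reduced w}"

definition e :: "letter list" where "e = []"

definition ga :: "letter list" where "ga = [(GA, False)]"
definition ga_inv :: "letter list" where "ga_inv = [(GA, True)]"
definition gb :: "letter list" where "gb = [(GB, False)]"
definition gb_inv :: "letter list" where "gb_inv = [(GB, True)]"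

fun red_cons :: "letter \<Rightarrow> letter list \<Rightarrow> letter list" where
  "red_cons x [] = [x]"
| "red_cons x (y # ys) = (if y = inv_letter x then ys else x # y # ys)"

definition fmult :: "letter list \<Rightarrow> letter list \<Rightarrow> letter list" where
  "fmult u v = foldr red_cons u v"

definition lmult :: "letter list \<Rightarrow> letter list set \<Rightarrow> letter list set" where
  "lmult g S = (\<lambda>s. fmult g s) ` S"

definition ell :: "nat \<Rightarrow> letter list" where
  "ell n = (if n mod 4 = 0 then ga else if n mod 4 = 1 then ga_inv
            else if n mod 4 = 2 then gb else gb_inv)"

fun I :: "nat \<Rightarrow> letter list set" where
  "I 0 = {e}"
| "I (Suc n) = I n \<union> lmult (ell n) (I n)"

text \<open>w begins with l: the reduced word of w is the reduced word of l
  concatenated with the reduced word of some u in F (elements are already reduced).\<close>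
definition begins_with :: "letter list \<Rightarrow> letter list \<Rightarrow> bool" where
  "begins_with w l = (\<exists>u \<in> FG. w = l @ u)"

end

theory Submission
  imports Defs
begin

text \<open>Each \<open>I n\<close> consists of reduced words and is closed under deleting the first letter.
  Multiplying \<open>s \<in> I n\<close> by a letter \<open>x\<close> either cancels the first letter of \<open>s\<close>, giving
  \<open>tl s \<in> I n\<close>, or prepends \<open>x\<close>. So an element of \<open>x I n\<close> outside \<open>I n\<close> is \<open>x\<close> followed by
  a reduced word.\<close>

lemma red_cons_eq_tl_or_Cons: "red_cons x s = tl s \<or> red_cons x s = x # s"
  by (cases s) auto

lemma reduced_red_cons: "reduced s \<Longrightarrow> reduced (red_cons x s)"
  by (cases s rule: reduced.cases) (auto simp: inv_letter_def)

lemma tl_red_cons: "tl (red_cons x s) = s \<or> tl (red_cons x s) = tl (tl s)"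
  using red_cons_eq_tl_or_Cons[of x s] by auto

lemma lmult_singleton: "lmult [x] S = red_cons x ` S"
  by (simp add: lmult_def fmult_def)

lemma ell_singleton: "\<exists>x. ell n = [x]"
  by (auto simp: ell_def ga_def ga_inv_def gb_def gb_inv_def)

lemma reduced_if_mem_I: "s \<in> I n \<Longrightarrow> reduced s"
proof (induction n arbitrary: s)
  case 0
  then show ?case by (simp add: e_def)
next
  case (Suc n)
  obtain x where "ell n = [x]" using ell_singleton by blast
  with Suc show ?case by (auto simp: lmult_singleton intro: reduced_red_cons)
qed

lemma tl_mem_I: "s \<in> I n \<Longrightarrow> tl s \<in> I n"
proof (induction n arbitrary: s)
  case 0
  then show ?case by (simp add: e_def)
next
  case (Suc n)
  obtain x where x: "ell n = [x]" using ell_singleton by blast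
  show ?case
  proof (cases "s \<in> I n")
    case True
    then show ?thesis by (simp add: Suc.IH)
  next
    case False
    then obtain t where "t \<in> I n" and s: "s = red_cons x t"
      using Suc.prems by (auto simp: x lmult_singleton)
    then have "t \<in> I n" "tl (tl t) \<in> I n" by (simp_all add: Suc.IH)
    then show ?thesis using tl_red_cons[of x t] by (auto simp: s)
  qed
qed

theorem lemma2p3:
  fixes n :: nat and l w :: "letter list"
  assumes "l \<in> {ga, ga_inv, gb, gb_inv}"
    and "w \<in> lmult l (I n) - I n"
  shows "begins_with w l"
proof -
  obtain x where x: "l = [x]"
    using assms(1) by (auto simp: ga_def ga_inv_def gb_def gb_inv_def)
  obtain s where s: "s \<in> I n" and w: "w = red_cons x s" and "w \<notin> I n"
    using assms(2) by (auto simp: x lmult_singleton)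
  have "w \<noteq> tl s" using tl_mem_I[OF s] \<open>w \<notin> I n\<close> by auto
  then have "w = x # s" using red_cons_eq_tl_or_Cons[of x s] w by simp
  then show ?thesis
    using reduced_if_mem_I[OF s] by (simp add: begins_with_def x FG_def)
qed

end
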